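(* Let $N\ge1$, and let $q,\gamma\ne0,s_0,\xi_0\ne0$ and $u_1,\dots,u_N,v_1,\dots,v_N$ be generic complex numbers. Define $$\mathsf Z(u,v)=\frac{(1-\gamma)(q-\gamma^{-1}s_0^2)(1-uv)+(1-q)(1-\xi_0s_0u)(1-\xi_0^{-1}s_0v)}{(1-uv)(1-quv)},$$ $$\mathsf M_i(v)=\xi_0^{2i-N}v^{N-i-1}\Big\{(1-s_0\xi_0^{-1}v)(v\xi_0^{-1}-s_0)\prod_{l=1}^N\frac{1-qvu_l}{1-vu_l}-\gamma^{-1}q^{N-i}(\gamma-s_0\xi_0^{-1}v)(\gamma qv\xi_0^{-1}-s_0)\Big\},$$ $$\widetilde{\mathsf M}_i(u)=u^{N-i-1}\Big\{(1-s_0\xi_0u)(u-s_0/\xi_0)\prod_{l=1}^N\frac{1-quv_l}{1-uv_l}-\gamma^{-1}q^{N-i}(\gamma-s_0\xi_0u)(\gamma qu-s_0/\xi_0)\Big\}.$$ Then $$\frac{\prod_{i,j=1}^N(1-qu_iv_j)}{\prod_{1\le i<j\le N}(u_i-u_j)(v_i-v_j)}\det\big[\mathsf Z(u_i,v_j)\big]_{i,j=1}^N=\frac{\det[\mathsf M_i(v_j)]_{i,j=1}^N}{\prod_{1\le i<j\le N}(v_i-v_j)}=\frac{\det[\widetilde{\mathsf M}_i(u_j)]_{i,j=1}^N}{\prod_{1\le i<j\le N}(u_i-u_j)}.$$ *)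

theory Defs
  imports Complex_Main "Jordan_Normal_Form.Determinant"
begin

text \<open>Parameters: q, gamma, s0, xi0. Vectors u, v are indexed 1..N.\<close>

definition ZZ :: "complex \<Rightarrow> complex \<Rightarrow> complex \<Rightarrow> complex \<Rightarrow> complex \<Rightarrow> complex \<Rightarrow> complex" where
  "ZZ q \<gamma> s0 \<xi>0 u v =
     ((1 - \<gamma>) * (q - inverse \<gamma> * s0^2) * (1 - u*v)
      + (1 - q) * (1 - \<xi>0 * s0 * u) * (1 - inverse \<xi>0 * s0 * v))
     / ((1 - u*v) * (1 - q*u*v))"

definition MM :: "nat \<Rightarrow> complex \<Rightarrow> complex \<Rightarrow> complex \<Rightarrow> complex \<Rightarrow> (nat \<Rightarrow> complex) \<Rightarrow> nat \<Rightarrow> complex \<Rightarrow> complex" where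
  "MM N q \<gamma> s0 \<xi>0 u i v =
     \<xi>0 powi (2 * int i - int N) * v powi (int N - int i - 1) *
     ((1 - s0 / \<xi>0 * v) * (v / \<xi>0 - s0) * (\<Prod>l\<in>{1..N}. (1 - q*v*u l) / (1 - v*u l))
      - inverse \<gamma> * q^(N - i) * (\<gamma> - s0 / \<xi>0 * v) * (\<gamma> * q * v / \<xi>0 - s0))"

definition MMt :: "nat \<Rightarrow> complex \<Rightarrow> complex \<Rightarrow> complex \<Rightarrow> complex \<Rightarrow> (nat \<Rightarrow> complex) \<Rightarrow> nat \<Rightarrow> complex \<Rightarrow> complex" where
  "MMt N q \<gamma> s0 \<xi>0 v i u =
     u powi (int N - int i - 1) *
     ((1 - s0 * \<xi>0 * u) * (u - s0 / \<xi>0) * (\<Prod>l\<in>{1..N}. (1 - q*u*v l) / (1 - u*v l))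
      - inverse \<gamma> * q^(N - i) * (\<gamma> - s0 * \<xi>0 * u) * (\<gamma> * q * u - s0 / \<xi>0))"

definition vdm :: "nat \<Rightarrow> (nat \<Rightarrow> complex) \<Rightarrow> complex" where
  "vdm N x = (\<Prod>i\<in>{1..N}. \<Prod>j\<in>{i+1..N}. x i - x j)"

end

theory Submission
  imports Defs "HOL-Computational_Algebra.Polynomial"
begin

text \<open>
  As a function of \<open>u\<close>, \<open>Z(u,v)\<close> has simple poles at \<open>u = 1/v\<close> and \<open>u = 1/(qv)\<close>,
  so \<open>Z(u,v) = \<alpha>(v)/(1 - uv) + \<beta>(v)/(1 - quv)\<close>. For distinct nodes \<open>u_1, ..., u_N\<close> and
  \<open>r < N\<close>, Lagrange interpolation gives the partial fraction identity
  \<open>\<Sum>_k u_k^r / (\<Prod>_{l \<noteq> k} (u_k - u_l) (1 - c u_k)) = c^(N-1-r) / \<Prod>_l (1 - c u_l)\<close>.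
  Applied with \<open>c = v\<close> and \<open>c = qv\<close>, it shows that \<open>M_{r+1}(v)\<close> equals
  \<open>\<xi>_0^(2r+1-N) \<Sum>_k w_{rk} Z(u_k,v) \<Prod>_l (1 - q u_l v)\<close> with Lagrange weights
  \<open>w_{rk} = u_k^r / \<Prod>_{l \<noteq> k} (u_k - u_l)\<close>. So the matrix \<open>[M_i(v_j)]\<close> factors as
  \<open>diag(\<xi>_0^(2r+1-N)) [w_{rk}] [Z(u_k,v_j)] diag(\<Prod>_l (1 - q u_l v_j))\<close>; the \<open>\<xi>_0\<close>-powers
  multiply to 1 and \<open>det [w_{rk}] = 1 / \<Prod>_{i<j} (u_i - u_j)\<close> by Vandermonde, which is
  the first equality. For the second, apply the first with \<open>u\<close> and \<open>v\<close> exchanged and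
  \<open>\<xi>_0\<close> replaced by \<open>1/\<xi>_0\<close>: this only transposes \<open>[Z(u_i,v_j)]\<close>, and the resulting
  matrix of the \<open>M_i\<close> differs from the matrix of the \<open>M~_i\<close> by row factors
  \<open>\<xi>_0^(2r+1-N)\<close>, which again multiply to 1.
\<close>

section \<open>Lagrange interpolation identities\<close>

lemma degree_prod_linear_le:
  assumes "finite A"
  shows "degree (\<Prod>l\<in>A. [:a l, b l:]) \<le> card A"
proof -
  have "degree (\<Prod>l\<in>A. [:a l, b l:]) \<le> (\<Sum>l\<in>A. degree [:a l, b l:])"
    using degree_prod_sum_le[OF assms, of "\<lambda>l. [:a l, b l:]"] by (simp add: o_def)
  also have "\<dots> \<le> (\<Sum>l\<in>A. 1)"
    by (intro sum_mono) simp
  finally show ?thesis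
    by simp
qed

lemma sum_lagrange_basis_power:
  fixes x :: "nat \<Rightarrow> 'a::field"
  assumes inj: "inj_on x {..<n}" and m: "m < n"
  shows "(\<Sum>k<n. x k ^ m * (\<Prod>l\<in>{..<n}-{k}. z - x l) / (\<Prod>l\<in>{..<n}-{k}. x k - x l)) = z ^ m"
proof -
  define p where "p = (\<Sum>k<n. smult (x k ^ m / (\<Prod>l\<in>{..<n}-{k}. x k - x l)) (\<Prod>l\<in>{..<n}-{k}. [:- x l, 1:]))"
  have poly_p: "poly p z = (\<Sum>k<n. x k ^ m * (\<Prod>l\<in>{..<n}-{k}. z - x l) / (\<Prod>l\<in>{..<n}-{k}. x k - x l))" for z
    unfolding p_def by (simp add: poly_sum poly_prod)
  have deg_p: "degree p \<le> n - 1"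
    unfolding p_def
  proof (rule degree_sum_le)
    fix k assume "k \<in> {..<n}"
    then show "degree (smult (x k ^ m / (\<Prod>l\<in>{..<n}-{k}. x k - x l)) (\<Prod>l\<in>{..<n}-{k}. [:- x l, 1:])) \<le> n - 1"
      using degree_prod_linear_le[of "{..<n}-{k}" "\<lambda>l. - x l" "\<lambda>l. 1"]
      by (simp add: order_trans[OF degree_smult_le])
  qed simp
  have nodes: "poly p (x j) = poly (monom 1 m) (x j)" if j: "j < n" for j
  proof -
    have "(\<Prod>l\<in>{..<n}-{k}. x j - x l) = 0" if "k \<in> {..<n}-{j}" for k
      using that j by (intro prod_zero) auto
    then have "(\<Sum>k\<in>{..<n}-{j}. x k ^ m * (\<Prod>l\<in>{..<n}-{k}. x j - x l) / (\<Prod>l\<in>{..<n}-{k}. x k - x l)) = 0"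
      by (intro sum.neutral) simp
    then have "poly p (x j) = x j ^ m * (\<Prod>l\<in>{..<n}-{j}. x j - x l) / (\<Prod>l\<in>{..<n}-{j}. x j - x l)"
      unfolding poly_p using j by (subst sum.remove[of _ j]) auto
    moreover have "(\<Prod>l\<in>{..<n}-{j}. x j - x l) \<noteq> 0"
      using inj j by (auto simp: inj_on_def)
    ultimately show ?thesis by (simp add: poly_monom)
  qed
  have card_nodes: "card (x ` {..<n}) = n"
    using inj by (simp add: card_image)
  have "p = monom 1 m"
  proof (rule poly_eqI_degree[of "x ` {..<n}"])
    show "poly p z = poly (monom 1 m) z" if "z \<in> x ` {..<n}" for z
      using nodes that by blast
    show "degree p < card (x ` {..<n})" "degree (monom (1::'a) m) < card (x ` {..<n})"
      using deg_p m card_nodes by (simp_all add: degree_monom_eq)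
  qed
  then have "poly p z = z ^ m"
    by (simp add: poly_monom)
  then show ?thesis
    unfolding poly_p .
qed

text \<open>For \<open>c \<noteq> 0\<close> the sum is \<open>c^(n-1)\<close> times the previous one at \<open>z = 1/c\<close>; both
  sides are polynomials in \<open>c\<close> of degree \<open>< n\<close>, so this also covers \<open>c = 0\<close>.\<close>

lemma sum_lagrange_basis_power_reflected:
  fixes x :: "nat \<Rightarrow> 'a::field_char_0"
  assumes inj: "inj_on x {..<n}" and m: "m < n"
  shows "(\<Sum>k<n. x k ^ m * (\<Prod>l\<in>{..<n}-{k}. 1 - c * x l) / (\<Prod>l\<in>{..<n}-{k}. x k - x l)) = c ^ (n - 1 - m)"
proof -
  define R where "R = (\<Sum>k<n. smult (x k ^ m / (\<Prod>l\<in>{..<n}-{k}. x k - x l)) (\<Prod>l\<in>{..<n}-{k}. [:1, - x l:]))"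
  have poly_R: "poly R c = (\<Sum>k<n. x k ^ m * (\<Prod>l\<in>{..<n}-{k}. 1 - c * x l) / (\<Prod>l\<in>{..<n}-{k}. x k - x l))" for c
    unfolding R_def by (simp add: poly_sum poly_prod mult.commute)
  have deg_R: "degree R \<le> n - 1"
    unfolding R_def
  proof (rule degree_sum_le)
    fix k assume "k \<in> {..<n}"
    then show "degree (smult (x k ^ m / (\<Prod>l\<in>{..<n}-{k}. x k - x l)) (\<Prod>l\<in>{..<n}-{k}. [:1, - x l:])) \<le> n - 1"
      using degree_prod_linear_le[of "{..<n}-{k}" "\<lambda>l. 1" "\<lambda>l. - x l"]
      by (simp add: order_trans[OF degree_smult_le])
  qed simp
  have nonzero: "poly R c = c ^ (n - 1 - m)" if c: "c \<noteq> 0" for c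
  proof -
    have "(\<Prod>l\<in>{..<n}-{k}. 1 - c * x l) = c ^ (n - 1) * (\<Prod>l\<in>{..<n}-{k}. 1/c - x l)" if "k < n" for k
    proof -
      have "(\<Prod>l\<in>{..<n}-{k}. 1 - c * x l) = (\<Prod>l\<in>{..<n}-{k}. c * (1/c - x l))"
        using c by (intro prod.cong) (auto simp: field_simps)
      then show ?thesis using that by (simp add: prod.distrib)
    qed
    then have "poly R c = c ^ (n - 1) * (\<Sum>k<n. x k ^ m * (\<Prod>l\<in>{..<n}-{k}. 1/c - x l) / (\<Prod>l\<in>{..<n}-{k}. x k - x l))"
      unfolding poly_R sum_distrib_left by (intro sum.cong) auto
    also have "\<dots> = c ^ (n - 1) * (1/c) ^ m"
      by (simp only: sum_lagrange_basis_power[OF inj m])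
    also have "\<dots> = c ^ (n - 1 - m)"
      using c m by (simp add: power_diff power_one_over divide_simps)
    finally show ?thesis .
  qed
  have card_nodes: "card ((of_nat :: nat \<Rightarrow> 'a) ` {1..n+1}) = n + 1"
    by (subst card_image) (auto simp: inj_on_def)
  have "R = monom 1 (n - 1 - m)"
  proof (rule poly_eqI_degree[of "of_nat ` {1..n+1}"])
    show "poly R c = poly (monom 1 (n - 1 - m)) c" if "c \<in> of_nat ` {1..n+1}" for c
      using nonzero that by (auto simp: poly_monom)
    show "degree R < card ((of_nat :: nat \<Rightarrow> 'a) ` {1..n+1})"
      "degree (monom (1::'a) (n - 1 - m)) < card ((of_nat :: nat \<Rightarrow> 'a) ` {1..n+1})"
      using deg_R card_nodes by (simp_all add: degree_monom_eq)
  qed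
  then have "poly R c = c ^ (n - 1 - m)"
    by (simp add: poly_monom)
  then show ?thesis
    unfolding poly_R .
qed

lemma sum_lagrange_partial_fractions:
  fixes x :: "nat \<Rightarrow> 'a::field_char_0"
  assumes inj: "inj_on x {..<n}" and m: "m < n" and nz: "\<And>l. l < n \<Longrightarrow> 1 - c * x l \<noteq> 0"
  shows "(\<Sum>k<n. x k ^ m / ((\<Prod>l\<in>{..<n}-{k}. x k - x l) * (1 - c * x k)))
    = c ^ (n - 1 - m) / (\<Prod>l<n. 1 - c * x l)"
proof -
  have "x k ^ m / ((\<Prod>l\<in>{..<n}-{k}. x k - x l) * (1 - c * x k))
      = x k ^ m * (\<Prod>l\<in>{..<n}-{k}. 1 - c * x l) / (\<Prod>l\<in>{..<n}-{k}. x k - x l) / (\<Prod>l<n. 1 - c * x l)"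
    if k: "k < n" for k
  proof -
    define others where "others = (\<Prod>l\<in>{..<n}-{k}. 1 - c * x l)"
    have "others \<noteq> 0"
      unfolding others_def using nz by auto
    have "(\<Prod>l<n. 1 - c * x l) = (1 - c * x k) * others"
      unfolding others_def using k by (subst prod.remove[of _ k]) auto
    then have "x k ^ m * others / (\<Prod>l\<in>{..<n}-{k}. x k - x l) / (\<Prod>l<n. 1 - c * x l)
        = x k ^ m * others / (((\<Prod>l\<in>{..<n}-{k}. x k - x l) * (1 - c * x k)) * others)"
      by (simp only: divide_divide_eq_left mult.assoc)
    also have "\<dots> = x k ^ m / ((\<Prod>l\<in>{..<n}-{k}. x k - x l) * (1 - c * x k))"
      using \<open>others \<noteq> 0\<close> by (rule nonzero_mult_divide_mult_cancel_right)
    finally show ?thesis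
      unfolding others_def by simp
  qed
  then have "(\<Sum>k<n. x k ^ m / ((\<Prod>l\<in>{..<n}-{k}. x k - x l) * (1 - c * x k)))
      = (\<Sum>k<n. x k ^ m * (\<Prod>l\<in>{..<n}-{k}. 1 - c * x l) / (\<Prod>l\<in>{..<n}-{k}. x k - x l)) / (\<Prod>l<n. 1 - c * x l)"
    unfolding sum_divide_distrib by (intro sum.cong) auto
  then show ?thesis
    by (simp only: sum_lagrange_basis_power_reflected[OF inj m])
qed

section \<open>Products and determinants\<close>

lemma prod_lower_triangle_swap:
  "(\<Prod>k<n. \<Prod>l<k. f k l) = (\<Prod>l<n. \<Prod>k\<in>{l<..<n}. f k (l::nat))"
proof (induction n)
  case (Suc n)
  have "{l<..<Suc n} = insert n {l<..<n}" if "l < n" for l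
    using that by auto
  moreover have "{n<..<Suc n} = {}"
    by auto
  ultimately have "(\<Prod>l<Suc n. \<Prod>k\<in>{l<..<Suc n}. f k l) = (\<Prod>l<n. f n l * (\<Prod>k\<in>{l<..<n}. f k l))"
    by simp
  then show ?case
    using Suc.IH by (simp add: prod.distrib mult.commute)
qed simp

lemma prod_off_diagonal:
  "(\<Prod>k<n. \<Prod>l\<in>{..<n}-{k}. f k l)
    = (\<Prod>k<n. \<Prod>l\<in>{k<..<n}. f k l) * (\<Prod>k<n. \<Prod>l\<in>{k<..<n}. f l (k::nat))"
proof -
  have "{..<n}-{k} = {..<k} \<union> {k<..<n}" if "k < n" for k
    using that by auto
  then have "(\<Prod>k<n. \<Prod>l\<in>{..<n}-{k}. f k l) = (\<Prod>k<n. (\<Prod>l<k. f k l) * (\<Prod>l\<in>{k<..<n}. f k l))"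
    by (intro prod.cong refl) (simp, rule prod.union_disjoint, auto)
  also have "\<dots> = (\<Prod>k<n. \<Prod>l<k. f k l) * (\<Prod>k<n. \<Prod>l\<in>{k<..<n}. f k l)"
    by (rule prod.distrib)
  finally show ?thesis
    by (simp only: prod_lower_triangle_swap mult.commute)
qed

lemma prod_lessThan_atLeast1_atMost_swap:
  fixes f :: "nat \<Rightarrow> nat \<Rightarrow> 'a::comm_monoid_mult"
  shows "(\<Prod>j<n. \<Prod>i\<in>{1..n}. f i (j + 1)) = (\<Prod>i\<in>{1..n}. \<Prod>j\<in>{1..n}. f i j)"
  using prod.atLeast1_atMost_eq[of "\<lambda>j. \<Prod>i\<in>{1..n}. f i j" n] prod.swap[of f "{1..n}" "{1..n}"]
  by simp

lemma prod_powi_centered_odd: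
  fixes \<xi> :: "'a::field"
  assumes xi: "\<xi> \<noteq> 0"
  shows "(\<Prod>r<n. \<xi> powi (2 * int r + 1 - int n)) = 1"
proof -
  have "\<xi> powi (2 * int r + 1 - int n) = \<xi> ^ (2 * r + 1) / \<xi> ^ n" for r
  proof -
    have "2 * int r + 1 - int n = int (2 * r + 1) - int n"
      by simp
    then show ?thesis
      by (simp only: power_int_diff[OF disjI1[OF xi]] power_int_of_nat)
  qed
  then have "(\<Prod>r<n. \<xi> powi (2 * int r + 1 - int n)) = (\<Prod>r<n. \<xi> ^ (2 * r + 1)) / (\<Prod>r<n. \<xi> ^ n)"
    by (simp add: prod_dividef)
  also have "(\<Prod>r<n. \<xi> ^ (2 * r + 1)) = \<xi> ^ (n * n)"
  proof -
    have "(\<Sum>r<n. 2 * r + 1) = n * n"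
      by (induction n) auto
    then show ?thesis
      by (simp only: power_sum[symmetric])
  qed
  also have "(\<Prod>r<n. \<xi> ^ n) = \<xi> ^ (n * n)"
    by (simp add: power_mult)
  finally show ?thesis
    using xi by simp
qed

lemma det_scale_rows:
  fixes c :: "nat \<Rightarrow> 'a::comm_ring_1"
  shows "det (mat n n (\<lambda>(i,j). c i * f i j)) = (\<Prod>i<n. c i) * det (mat n n (\<lambda>(i,j). f i j))"
proof -
  have "(\<Prod>i = 0..<n. mat n n (\<lambda>(i,j). c i * f i j) $$ (i, p i))
      = (\<Prod>i<n. c i) * (\<Prod>i = 0..<n. mat n n (\<lambda>(i,j). f i j) $$ (i, p i))"
    if "p permutes {0..<n}" for p
    using that by (auto simp: prod.distrib atLeast0LessThan permutes_in_image intro!: prod.cong)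
  then show ?thesis
    by (simp add: det_def'[of _ n] sum_distrib_left mult.left_commute)
qed

lemma det_scale_cols:
  fixes c :: "nat \<Rightarrow> 'a::comm_ring_1"
  shows "det (mat n n (\<lambda>(i,j). f i j * c j)) = (\<Prod>j<n. c j) * det (mat n n (\<lambda>(i,j). f i j))"
proof -
  have "transpose_mat (mat n n (\<lambda>(i,j). f i j * c j)) = mat n n (\<lambda>(i,j). c i * f j i)"
    "transpose_mat (mat n n (\<lambda>(i,j). f i j)) = mat n n (\<lambda>(i,j). f j i)"
    by (auto intro!: eq_matI)
  then show ?thesis
    by (metis (no_types) det_transpose mat_carrier det_scale_rows)
qed

lemma det_mat_sum_product:
  fixes a b :: "nat \<Rightarrow> nat \<Rightarrow> 'a::comm_ring_1"
  shows "det (mat n n (\<lambda>(i,j). \<Sum>k<n. a i k * b k j))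
    = det (mat n n (\<lambda>(i,k). a i k)) * det (mat n n (\<lambda>(k,j). b k j))"
proof -
  have "mat n n (\<lambda>(i,j). \<Sum>k<n. a i k * b k j) = mat n n (\<lambda>(i,k). a i k) * mat n n (\<lambda>(k,j). b k j)"
    by (rule eq_matI) (auto simp: scalar_prod_def atLeast0LessThan intro!: sum.cong)
  then show ?thesis by (simp add: det_mult[of _ n])
qed

text \<open>Subtracting \<open>x_0\<close> times each row from the next one clears the first column.\<close>

lemma det_vandermonde_Suc:
  fixes x :: "nat \<Rightarrow> 'a::comm_ring_1"
  shows "det (mat (Suc n) (Suc n) (\<lambda>(r,k). x k ^ r))
    = (\<Prod>k<n. x (Suc k) - x 0) * det (mat n n (\<lambda>(r,k). x (Suc k) ^ r))"
proof -
  let ?L = "mat (Suc n) (Suc n) (\<lambda>(i,j). (if j = i then 1 else 0) + (if Suc j = i then - x 0 else 0))"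
  let ?V = "mat (Suc n) (Suc n) (\<lambda>(r,k). x k ^ r)"
  let ?B = "mat (Suc n) (Suc n) (\<lambda>(i,j). x j ^ i - (if i = 0 then 0 else x 0 * x j ^ (i - 1)))"
  have "?L * ?V = ?B"
  proof (rule eq_matI)
    fix i j assume ij: "i < dim_row ?B" "j < dim_col ?B"
    have "(?L * ?V) $$ (i,j) = (\<Sum>k<Suc n. ((if k = i then 1 else 0) + (if Suc k = i then - x 0 else 0)) * x j ^ k)"
      using ij by (auto simp: scalar_prod_def atLeast0LessThan intro!: sum.cong)
    also have "\<dots> = (\<Sum>k<Suc n. (if k = i then x j ^ k else 0))
        + (\<Sum>k<Suc n. (if Suc k = i then - x 0 * x j ^ k else 0))"
      unfolding sum.distrib[symmetric] by (intro sum.cong) auto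
    also have "\<dots> = ?B $$ (i,j)"
    proof (cases i)
      case (Suc i')
      have "(\<Sum>k<Suc n. (if Suc k = i then - x 0 * x j ^ k else 0))
          = (\<Sum>k<Suc n. (if k = i' then - x 0 * x j ^ k else 0))"
        using Suc by (intro sum.cong) auto
      then show ?thesis using ij Suc by simp
    qed (use ij in simp)
    finally show "(?L * ?V) $$ (i,j) = ?B $$ (i,j)" .
  qed auto
  moreover have "det ?L = 1"
    by (subst det_lower_triangular[of "Suc n"]) (auto simp: prod_list_diag_prod)
  ultimately have "det ?V = det ?B"
    using det_mult[of ?L "Suc n" ?V] by simp
  also have "\<dots> = (\<Sum>i<Suc n. ?B $$ (i,0) * cofactor ?B i 0)"
    by (rule laplace_expansion_column) auto
  also have "\<dots> = det (mat_delete ?B 0 0)"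
    by (subst sum.remove[of _ 0]) (auto intro!: sum.neutral simp: power_eq_if cofactor_def)
  also have "mat_delete ?B 0 0 = mat n n (\<lambda>(i,j). x (Suc j) ^ i * (x (Suc j) - x 0))"
    by (rule eq_matI) (auto simp: mat_delete_def algebra_simps)
  finally show ?thesis by (simp only: det_scale_cols)
qed

lemma det_vandermonde:
  fixes x :: "nat \<Rightarrow> 'a::comm_ring_1"
  shows "det (mat n n (\<lambda>(r,k). x k ^ r)) = (\<Prod>k<n. \<Prod>l\<in>{k<..<n}. x l - x k)"
proof (induction n arbitrary: x)
  case (Suc n)
  have "(\<Prod>l\<in>{0<..<Suc n}. x l - x 0) = (\<Prod>k<n. x (Suc k) - x 0)"
    unfolding atLeastSucLessThan_greaterThanLessThan[symmetric] prod.shift_bounds_Suc_ivl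
    by (simp add: atLeast0LessThan)
  then have "(\<Prod>k<Suc n. \<Prod>l\<in>{k<..<Suc n}. x l - x k)
      = (\<Prod>k<n. x (Suc k) - x 0) * (\<Prod>k<n. \<Prod>l\<in>{k<..<n}. x (Suc l) - x (Suc k))"
    unfolding prod.lessThan_Suc_shift atLeastSucLessThan_greaterThanLessThan[symmetric]
      prod.shift_bounds_Suc_ivl by simp
  then show ?case
    using Suc.IH[of "\<lambda>k. x (Suc k)"] by (simp add: det_vandermonde_Suc)
qed simp

lemma det_lagrange_weights_mult_vandermonde:
  fixes x :: "nat \<Rightarrow> 'a::field"
  assumes inj: "inj_on x {..<n}"
  shows "det (mat n n (\<lambda>(r,k). x k ^ r / (\<Prod>l\<in>{..<n}-{k}. x k - x l)))
    * (\<Prod>k<n. \<Prod>l\<in>{k<..<n}. x k - x l) = 1"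
proof -
  define pd where "pd k = (\<Prod>l\<in>{..<n}-{k}. x k - x l)" for k
  have pd: "(\<Prod>k<n. pd k) = (\<Prod>k<n. \<Prod>l\<in>{k<..<n}. x k - x l) * (\<Prod>k<n. \<Prod>l\<in>{k<..<n}. x l - x k)"
    unfolding pd_def by (rule prod_off_diagonal)
  have "(\<Prod>k<n. pd k) \<noteq> 0"
    unfolding pd_def using inj by (auto simp: inj_on_def)
  have "det (mat n n (\<lambda>(r,k). x k ^ r / pd k)) = det (mat n n (\<lambda>(r,k). x k ^ r * (1 / pd k)))"
    by simp
  also have "\<dots> = (\<Prod>k<n. 1 / pd k) * det (mat n n (\<lambda>(r,k). x k ^ r))"
    by (rule det_scale_cols)
  also have "\<dots> = 1 / (\<Prod>k<n. pd k) * (\<Prod>k<n. \<Prod>l\<in>{k<..<n}. x l - x k)"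
    by (simp only: prod_dividef prod.neutral_const det_vandermonde)
  finally have "det (mat n n (\<lambda>(r,k). x k ^ r / pd k)) * (\<Prod>k<n. \<Prod>l\<in>{k<..<n}. x k - x l)
      = 1 / (\<Prod>k<n. pd k) * (\<Prod>k<n. pd k)"
    unfolding pd by (simp only: mult_ac)
  also have "\<dots> = 1"
    using \<open>(\<Prod>k<n. pd k) \<noteq> 0\<close> by simp
  finally show ?thesis
    unfolding pd_def .
qed

lemma vdm_eq_prod_lessThan:
  "vdm n u = (\<Prod>k<n. \<Prod>l\<in>{k<..<n}. u (Suc k) - u (Suc l))"
proof -
  have "{Suc k + 1..n} = Suc ` {k<..<n}" for k
    by (simp add: atLeastSucLessThan_greaterThanLessThan[symmetric] atLeastLessThanSuc_atLeastAtMost)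
  then have "(\<Prod>j\<in>{Suc k + 1..n}. u (Suc k) - u j) = (\<Prod>l\<in>{k<..<n}. u (Suc k) - u (Suc l))" for k
    by (simp add: prod.reindex)
  moreover have "vdm n u = (\<Prod>k<n. \<Prod>j\<in>{Suc k + 1..n}. u (Suc k) - u j)"
    unfolding vdm_def using prod.atLeast1_atMost_eq[of "\<lambda>i. \<Prod>j\<in>{i+1..n}. u i - u j" n] by simp
  ultimately show ?thesis
    by (simp only:)
qed

lemma vdm_nonzero:
  assumes "inj_on x {1..n}"
  shows "vdm n x \<noteq> 0"
proof -
  have "x i - x j \<noteq> 0" if "i \<in> {1..n}" "j \<in> {i+1..n}" for i j
    using inj_onD[OF assms, of i j] that by auto
  then show ?thesis
    unfolding vdm_def by simp
qed

section \<open>Factorisation of the matrix of the \<open>M\<^sub>i\<close>\<close>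

definition ZZ_pole_coeff :: "complex \<Rightarrow> complex \<Rightarrow> complex \<Rightarrow> complex" where
  "ZZ_pole_coeff s0 \<xi>0 w = (1 - s0 / \<xi>0 * w) * (1 - s0 * \<xi>0 / w)"

definition ZZ_qpole_coeff :: "complex \<Rightarrow> complex \<Rightarrow> complex \<Rightarrow> complex \<Rightarrow> complex \<Rightarrow> complex" where
  "ZZ_qpole_coeff q \<gamma> s0 \<xi>0 w = (1 - \<gamma>) * (q - inverse \<gamma> * s0^2) - (1 - s0 / \<xi>0 * w) * (q - s0 * \<xi>0 / w)"

lemma ZZ_partial_fractions:
  assumes "w \<noteq> 0" "\<gamma> \<noteq> 0" "\<xi>0 \<noteq> 0" and "1 - w * x \<noteq> 0" "1 - q * w * x \<noteq> 0"
  shows "ZZ q \<gamma> s0 \<xi>0 x w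
    = ZZ_pole_coeff s0 \<xi>0 w / (1 - w * x) + ZZ_qpole_coeff q \<gamma> s0 \<xi>0 w / (1 - q * w * x)"
proof -
  have "ZZ_pole_coeff s0 \<xi>0 w * (1 - q * w * x) + ZZ_qpole_coeff q \<gamma> s0 \<xi>0 w * (1 - w * x)
      = (1 - \<gamma>) * (q - inverse \<gamma> * s0^2) * (1 - x * w)
        + (1 - q) * (1 - \<xi>0 * s0 * x) * (1 - inverse \<xi>0 * s0 * w)"
    using assms(1-3) unfolding ZZ_pole_coeff_def ZZ_qpole_coeff_def by (simp add: field_simps)
  moreover have "(1 - x * w) * (1 - q * x * w) = (1 - w * x) * (1 - q * w * x)"
    by (simp add: mult_ac)
  ultimately show ?thesis
    using assms(4,5) unfolding ZZ_def by (simp add: field_simps)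
qed

lemma sum_lagrange_weighted_ZZ:
  fixes x :: "nat \<Rightarrow> complex"
  assumes inj: "inj_on x {..<n}" and r: "r < n" and w: "w \<noteq> 0" and g: "\<gamma> \<noteq> 0" and xi: "\<xi>0 \<noteq> 0"
    and d1: "\<And>l. l < n \<Longrightarrow> 1 - w * x l \<noteq> 0" and d2: "\<And>l. l < n \<Longrightarrow> 1 - q * w * x l \<noteq> 0"
  shows "(\<Sum>k<n. x k ^ r / (\<Prod>l\<in>{..<n}-{k}. x k - x l) * ((\<Prod>l<n. 1 - q * w * x l) * ZZ q \<gamma> s0 \<xi>0 (x k) w))
    = w ^ (n - 1 - r) * (ZZ_pole_coeff s0 \<xi>0 w * (\<Prod>l<n. (1 - q * w * x l) / (1 - w * x l))
        + ZZ_qpole_coeff q \<gamma> s0 \<xi>0 w * q ^ (n - 1 - r))"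
proof -
  define D where "D = (\<Prod>l<n. 1 - q * w * x l)"
  define pd where "pd k = (\<Prod>l\<in>{..<n}-{k}. x k - x l)" for k
  define \<alpha> \<beta> where "\<alpha> = ZZ_pole_coeff s0 \<xi>0 w" and "\<beta> = ZZ_qpole_coeff q \<gamma> s0 \<xi>0 w"
  have "D \<noteq> 0"
    unfolding D_def using d2 by simp
  have summand: "x k ^ r / pd k * (D * ZZ q \<gamma> s0 \<xi>0 (x k) w)
      = D * \<alpha> * (x k ^ r / (pd k * (1 - w * x k))) + D * \<beta> * (x k ^ r / (pd k * (1 - (q * w) * x k)))"
    if "k < n" for k
    using that d1 d2 unfolding ZZ_partial_fractions[OF w g xi d1[OF that] d2[OF that]] \<alpha>_def \<beta>_def
    by (simp add: ring_distribs mult_ac)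
  have lagrange_w: "(\<Sum>k<n. x k ^ r / (pd k * (1 - w * x k))) = w ^ (n - 1 - r) / (\<Prod>l<n. 1 - w * x l)"
    unfolding pd_def using d1 by (rule sum_lagrange_partial_fractions[OF inj r])
  have lagrange_qw: "(\<Sum>k<n. x k ^ r / (pd k * (1 - (q * w) * x k)))
      = (q * w) ^ (n - 1 - r) / (\<Prod>l<n. 1 - (q * w) * x l)"
    unfolding pd_def using d2 by (rule sum_lagrange_partial_fractions[OF inj r])
  from summand have "(\<Sum>k<n. x k ^ r / pd k * (D * ZZ q \<gamma> s0 \<xi>0 (x k) w))
      = D * \<alpha> * (\<Sum>k<n. x k ^ r / (pd k * (1 - w * x k))) + D * \<beta> * (\<Sum>k<n. x k ^ r / (pd k * (1 - (q * w) * x k)))"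
    by (simp add: sum.distrib sum_distrib_left)
  also have "\<dots> = D * \<alpha> * (w ^ (n - 1 - r) / (\<Prod>l<n. 1 - w * x l))
      + D * \<beta> * ((q * w) ^ (n - 1 - r) / (\<Prod>l<n. 1 - (q * w) * x l))"
    unfolding lagrange_w lagrange_qw ..
  also have "\<dots> = w ^ (n - 1 - r) * (\<alpha> * (\<Prod>l<n. (1 - q * w * x l) / (1 - w * x l)) + \<beta> * q ^ (n - 1 - r))"
    using \<open>D \<noteq> 0\<close> unfolding D_def by (simp add: prod_dividef power_mult_distrib field_simps)
  finally show ?thesis
    unfolding D_def pd_def \<alpha>_def \<beta>_def .
qed

lemma MM_Suc_eq:
  fixes u :: "nat \<Rightarrow> complex"
  assumes r: "r < n" and w: "w \<noteq> 0" and g: "\<gamma> \<noteq> 0" and xi: "\<xi>0 \<noteq> 0"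
  shows "MM n q \<gamma> s0 \<xi>0 u (Suc r) w = \<xi>0 powi (2 * int r + 1 - int n) *
    (w ^ (n - 1 - r) * (ZZ_pole_coeff s0 \<xi>0 w * (\<Prod>l<n. (1 - q * w * u (Suc l)) / (1 - w * u (Suc l)))
      + ZZ_qpole_coeff q \<gamma> s0 \<xi>0 w * q ^ (n - 1 - r)))"
proof -
  define P where "P = (\<Prod>l<n. (1 - q * w * u (Suc l)) / (1 - w * u (Suc l)))"
  define c where "c = \<xi>0 powi (2 * int r + 1 - int n)"
  define A where "A = (1 - s0 / \<xi>0 * w) * (w / \<xi>0 - s0)"
  define B where "B = inverse \<gamma> * (\<gamma> - s0 / \<xi>0 * w) * (\<gamma> * q * w / \<xi>0 - s0)"
  have "(\<Prod>l\<in>{1..n}. (1 - q * w * u l) / (1 - w * u l)) = P"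
    unfolding P_def by (simp only: prod.atLeast1_atMost_eq One_nat_def)
  moreover have "\<xi>0 powi (2 * int (Suc r) - int n) = \<xi>0 * c"
  proof -
    have "2 * int (Suc r) - int n = (2 * int r + 1 - int n) + 1"
      by simp
    then show ?thesis
      unfolding c_def by (simp only: power_int_add_1'[OF disjI1[OF xi]])
  qed
  moreover have "w powi (int n - int (Suc r) - 1) = w ^ (n - 1 - r) / w"
  proof -
    have "int n - int (Suc r) - 1 = int (n - 1 - r) - 1"
      using r by simp
    then show ?thesis
      by (simp only: power_int_diff[OF disjI1[OF w]] power_int_of_nat power_int_1_right)
  qed
  moreover have "n - Suc r = n - 1 - r"
    by simp
  ultimately have MM_eq: "MM n q \<gamma> s0 \<xi>0 u (Suc r) w = \<xi>0 * c * (w ^ (n - 1 - r) / w) * (A * P - q ^ (n - 1 - r) * B)"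
    unfolding MM_def A_def B_def by (simp only: mult_ac)
  have pole: "ZZ_pole_coeff s0 \<xi>0 w = \<xi>0 / w * A"
    using w xi unfolding ZZ_pole_coeff_def A_def by (simp add: field_simps)
  have qpole: "ZZ_qpole_coeff q \<gamma> s0 \<xi>0 w = - (\<xi>0 / w * B)"
    using w xi g unfolding ZZ_qpole_coeff_def B_def by (simp add: field_simps power2_eq_square)
  show ?thesis
    unfolding MM_eq pole qpole P_def[symmetric] c_def[symmetric] using w by (simp add: field_simps)
qed

lemma MM_Suc_eq_weighted_sum:
  fixes u :: "nat \<Rightarrow> complex"
  assumes g: "\<gamma> \<noteq> 0" and xi: "\<xi>0 \<noteq> 0" and inj: "inj_on (\<lambda>k. u (Suc k)) {..<n}"
    and r: "r < n" and w: "w \<noteq> 0"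
    and d1: "\<And>l. l < n \<Longrightarrow> 1 - w * u (Suc l) \<noteq> 0" and d2: "\<And>l. l < n \<Longrightarrow> 1 - q * w * u (Suc l) \<noteq> 0"
  shows "MM n q \<gamma> s0 \<xi>0 u (Suc r) w = \<xi>0 powi (2 * int r + 1 - int n) *
    (\<Sum>k<n. u (Suc k) ^ r / (\<Prod>l\<in>{..<n}-{k}. u (Suc k) - u (Suc l))
      * ((\<Prod>l<n. 1 - q * w * u (Suc l)) * ZZ q \<gamma> s0 \<xi>0 (u (Suc k)) w))"
  by (simp only: MM_Suc_eq[OF r w g xi] sum_lagrange_weighted_ZZ[OF inj r w g xi d1 d2])

lemma det_MM_mult_vdm:
  fixes u v :: "nat \<Rightarrow> complex"
  assumes g: "\<gamma> \<noteq> 0" and xi: "\<xi>0 \<noteq> 0" and inj: "inj_on u {1..n}"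
    and v: "\<And>j. j \<in> {1..n} \<Longrightarrow> v j \<noteq> 0"
    and uv: "\<And>i j. i \<in> {1..n} \<Longrightarrow> j \<in> {1..n} \<Longrightarrow> 1 - u i * v j \<noteq> 0"
    and quv: "\<And>i j. i \<in> {1..n} \<Longrightarrow> j \<in> {1..n} \<Longrightarrow> 1 - q * u i * v j \<noteq> 0"
  shows "det (mat n n (\<lambda>(i,j). MM n q \<gamma> s0 \<xi>0 u (i+1) (v (j+1)))) * vdm n u
    = (\<Prod>i\<in>{1..n}. \<Prod>j\<in>{1..n}. 1 - q * u i * v j)
      * det (mat n n (\<lambda>(i,j). ZZ q \<gamma> s0 \<xi>0 (u (i+1)) (v (j+1))))"
proof -
  define w where "w j = v (Suc j)" for j
  have w: "w j \<noteq> 0" if "j < n" for j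
    using v that unfolding w_def by simp
  have d1: "1 - u i * w j \<noteq> 0" and d2: "1 - q * u i * w j \<noteq> 0" if "i \<in> {1..n}" "j < n" for i j
    using uv quv that unfolding w_def by simp_all
  define pd where "pd k = (\<Prod>l\<in>{..<n}-{k}. u (Suc k) - u (Suc l))" for k
  define D where "D j = (\<Prod>l<n. 1 - q * w j * u (Suc l))" for j
  define c where "c r = \<xi>0 powi (2 * int r + 1 - int n)" for r
  have inj_shift: "inj_on (\<lambda>k. u (Suc k)) {..<n}"
    by (rule inj_onI) (use inj_onD[OF inj] in force)
  have entry: "MM n q \<gamma> s0 \<xi>0 u (Suc r) (w j)
      = (\<Sum>k<n. (c r * (u (Suc k) ^ r / pd k)) * (ZZ q \<gamma> s0 \<xi>0 (u (Suc k)) (w j) * D j))"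
    if r: "r < n" and j: "j < n" for r j
  proof -
    have nonzero: "1 - w j * u (Suc l) \<noteq> 0" "1 - q * w j * u (Suc l) \<noteq> 0" if "l < n" for l
      using d1[of "Suc l" j] d2[of "Suc l" j] that j by (simp_all add: mult_ac)
    have "MM n q \<gamma> s0 \<xi>0 u (Suc r) (w j)
        = c r * (\<Sum>k<n. u (Suc k) ^ r / pd k * (D j * ZZ q \<gamma> s0 \<xi>0 (u (Suc k)) (w j)))"
      unfolding c_def pd_def D_def
      by (rule MM_Suc_eq_weighted_sum[OF g xi inj_shift r w[OF j] nonzero])
    then show ?thesis
      by (simp add: sum_distrib_left mult_ac)
  qed
  have "det (mat n n (\<lambda>(i,j). MM n q \<gamma> s0 \<xi>0 u (i+1) (w j)))
      = det (mat n n (\<lambda>(r,j). \<Sum>k<n. (c r * (u (Suc k) ^ r / pd k)) * (ZZ q \<gamma> s0 \<xi>0 (u (Suc k)) (w j) * D j)))"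
    by (rule arg_cong[of _ _ det], rule eq_matI) (auto simp: entry)
  also have "\<dots> = ((\<Prod>r<n. c r) * det (mat n n (\<lambda>(r,k). u (Suc k) ^ r / pd k)))
      * ((\<Prod>j<n. D j) * det (mat n n (\<lambda>(k,j). ZZ q \<gamma> s0 \<xi>0 (u (Suc k)) (w j))))"
    by (simp only: det_mat_sum_product det_scale_rows det_scale_cols)
  also have "(\<Prod>r<n. c r) = 1"
    unfolding c_def by (rule prod_powi_centered_odd[OF xi])
  finally have "det (mat n n (\<lambda>(i,j). MM n q \<gamma> s0 \<xi>0 u (i+1) (w j))) * vdm n u
      = (det (mat n n (\<lambda>(r,k). u (Suc k) ^ r / pd k)) * vdm n u)
        * ((\<Prod>j<n. D j) * det (mat n n (\<lambda>(k,j). ZZ q \<gamma> s0 \<xi>0 (u (Suc k)) (w j))))"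
    by (simp only: mult_ac mult_1)
  also have "det (mat n n (\<lambda>(r,k). u (Suc k) ^ r / pd k)) * vdm n u = 1"
    unfolding vdm_eq_prod_lessThan pd_def by (rule det_lagrange_weights_mult_vandermonde[OF inj_shift])
  also have "(\<Prod>j<n. D j) = (\<Prod>i\<in>{1..n}. \<Prod>j\<in>{1..n}. 1 - q * u i * v j)"
    unfolding D_def w_def prod_lessThan_atLeast1_atMost_swap[of "\<lambda>i j. 1 - q * u i * v j", symmetric]
    by (simp only: prod.atLeast1_atMost_eq One_nat_def add_Suc_right add_0_right mult_ac)
  finally show ?thesis
    unfolding w_def by (simp only: mult_1 Suc_eq_plus1)
qed

section \<open>Exchanging \<open>u\<close> and \<open>v\<close>\<close>

lemma ZZ_inverse_swap:
  assumes "\<xi>0 \<noteq> 0"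
  shows "ZZ q \<gamma> s0 (1 / \<xi>0) a b = ZZ q \<gamma> s0 \<xi>0 b a"
proof -
  have "(1 - a * b) * (1 - q * a * b) = (1 - b * a) * (1 - q * b * a)"
    by (simp add: mult_ac)
  moreover have "(1 - \<gamma>) * (q - inverse \<gamma> * s0^2) * (1 - a * b)
      + (1 - q) * (1 - (1 / \<xi>0) * s0 * a) * (1 - inverse (1 / \<xi>0) * s0 * b)
    = (1 - \<gamma>) * (q - inverse \<gamma> * s0^2) * (1 - b * a)
      + (1 - q) * (1 - \<xi>0 * s0 * b) * (1 - inverse \<xi>0 * s0 * a)"
    using assms by (simp add: divide_inverse algebra_simps)
  ultimately show ?thesis
    unfolding ZZ_def by (simp only:)
qed

lemma det_ZZ_inverse_swap:
  assumes "\<xi>0 \<noteq> 0"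
  shows "det (mat n n (\<lambda>(i,j). ZZ q \<gamma> s0 (1 / \<xi>0) (v (i+1)) (u (j+1))))
    = det (mat n n (\<lambda>(i,j). ZZ q \<gamma> s0 \<xi>0 (u (i+1)) (v (j+1))))"
proof -
  have "mat n n (\<lambda>(i,j). ZZ q \<gamma> s0 (1 / \<xi>0) (v (i+1)) (u (j+1)))
      = transpose_mat (mat n n (\<lambda>(i,j). ZZ q \<gamma> s0 \<xi>0 (u (i+1)) (v (j+1))))"
    by (rule eq_matI) (auto simp: ZZ_inverse_swap[OF assms])
  then show ?thesis
    by (simp add: det_transpose[OF mat_carrier])
qed

lemma MMt_Suc_eq_MM_inverse:
  assumes xi: "\<xi>0 \<noteq> 0" and g: "\<gamma> \<noteq> 0"
  shows "MMt n q \<gamma> s0 \<xi>0 v (Suc r) t = \<xi>0 powi (2 * int r + 1 - int n) * MM n q \<gamma> s0 (1 / \<xi>0) v (Suc r) t"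
proof -
  define b where "b = 2 * int (Suc r) - int n"
  define P where "P = (\<Prod>l\<in>{1..n}. (1 - q * t * v l) / (1 - t * v l))"
  define T where "T = t powi (int n - int (Suc r) - 1)"
  define B where "B = (1 - s0 * \<xi>0 * t) * (t - s0 / \<xi>0) * P
    - inverse \<gamma> * q ^ (n - Suc r) * (\<gamma> - s0 * \<xi>0 * t) * (\<gamma> * q * t - s0 / \<xi>0)"
  have powers: "\<xi>0 powi (b - 1) * (1 / \<xi>0) powi b = 1 / \<xi>0"
    using xi by (simp add: power_int_diff power_int_divide_distrib)
  have MM_eq: "MM n q \<gamma> s0 (1 / \<xi>0) v (Suc r) t = (1 / \<xi>0) powi b * T * (\<xi>0 * B)"
  proof -
    have "(1 - s0 / (1/\<xi>0) * t) * (t / (1/\<xi>0) - s0) * P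
        - inverse \<gamma> * q^(n - Suc r) * (\<gamma> - s0/(1/\<xi>0)*t) * (\<gamma>*q*t/(1/\<xi>0) - s0) = \<xi>0 * B"
      unfolding B_def using xi g by (simp add: field_simps)
    then show ?thesis
      unfolding MM_def P_def[symmetric] b_def[symmetric] T_def[symmetric] by (simp only:)
  qed
  have exponent: "2 * int r + 1 - int n = b - 1"
    unfolding b_def by simp
  have "MMt n q \<gamma> s0 \<xi>0 v (Suc r) t = T * B"
    unfolding MMt_def T_def B_def P_def ..
  also have "\<dots> = (\<xi>0 powi (b - 1) * (1 / \<xi>0) powi b) * \<xi>0 * (T * B)"
    unfolding powers using xi by simp
  also have "\<dots> = \<xi>0 powi (b - 1) * ((1 / \<xi>0) powi b * T * (\<xi>0 * B))"
    by (simp only: mult_ac)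
  finally show ?thesis
    unfolding exponent MM_eq .
qed

lemma det_MMt_eq_det_MM_inverse:
  assumes "\<xi>0 \<noteq> 0" "\<gamma> \<noteq> 0"
  shows "det (mat n n (\<lambda>(i,j). MMt n q \<gamma> s0 \<xi>0 v (i+1) (t j)))
    = det (mat n n (\<lambda>(i,j). MM n q \<gamma> s0 (1 / \<xi>0) v (i+1) (t j)))"
proof -
  have "det (mat n n (\<lambda>(i,j). MMt n q \<gamma> s0 \<xi>0 v (i+1) (t j)))
      = det (mat n n (\<lambda>(i,j). \<xi>0 powi (2 * int i + 1 - int n) * MM n q \<gamma> s0 (1 / \<xi>0) v (i+1) (t j)))"
    by (rule arg_cong[of _ _ det], rule eq_matI) (auto simp: MMt_Suc_eq_MM_inverse[OF assms])
  then show ?thesis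
    by (simp only: det_scale_rows prod_powi_centered_odd[OF assms(1)] mult_1)
qed

lemma det_MMt_mult_vdm:
  fixes u v :: "nat \<Rightarrow> complex"
  assumes g: "\<gamma> \<noteq> 0" and xi: "\<xi>0 \<noteq> 0" and inj: "inj_on v {1..n}"
    and u: "\<And>i. i \<in> {1..n} \<Longrightarrow> u i \<noteq> 0"
    and uv: "\<And>i j. i \<in> {1..n} \<Longrightarrow> j \<in> {1..n} \<Longrightarrow> 1 - u i * v j \<noteq> 0"
    and quv: "\<And>i j. i \<in> {1..n} \<Longrightarrow> j \<in> {1..n} \<Longrightarrow> 1 - q * u i * v j \<noteq> 0"
  shows "det (mat n n (\<lambda>(i,j). MMt n q \<gamma> s0 \<xi>0 v (i+1) (u (j+1)))) * vdm n v
    = (\<Prod>i\<in>{1..n}. \<Prod>j\<in>{1..n}. 1 - q * u i * v j)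
      * det (mat n n (\<lambda>(i,j). ZZ q \<gamma> s0 \<xi>0 (u (i+1)) (v (j+1))))"
proof -
  have "1 - v i * u j \<noteq> 0" "1 - q * v i * u j \<noteq> 0" if "i \<in> {1..n}" "j \<in> {1..n}" for i j
    using uv[OF that(2,1)] quv[OF that(2,1)] by (simp_all add: mult_ac)
  then have "det (mat n n (\<lambda>(i,j). MMt n q \<gamma> s0 \<xi>0 v (i+1) (u (j+1)))) * vdm n v
      = (\<Prod>i\<in>{1..n}. \<Prod>j\<in>{1..n}. 1 - q * v i * u j)
        * det (mat n n (\<lambda>(i,j). ZZ q \<gamma> s0 (1 / \<xi>0) (v (i+1)) (u (j+1))))"
    unfolding det_MMt_eq_det_MM_inverse[OF xi g]
    by (intro det_MM_mult_vdm[OF g _ inj]) (use xi u in auto)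
  also have "(\<Prod>i\<in>{1..n}. \<Prod>j\<in>{1..n}. 1 - q * v i * u j) = (\<Prod>i\<in>{1..n}. \<Prod>j\<in>{1..n}. 1 - q * u i * v j)"
    by (subst prod.swap) (simp add: mult_ac)
  finally show ?thesis
    unfolding det_ZZ_inverse_swap[OF xi] .
qed

theorem theorem4p1:
  fixes N :: nat and q \<gamma> s0 \<xi>0 :: complex and u v :: "nat \<Rightarrow> complex"
  assumes "N \<ge> 1" and "\<gamma> \<noteq> 0" and "\<xi>0 \<noteq> 0"
    and "\<And>i j. i \<in> {1..N} \<Longrightarrow> j \<in> {1..N} \<Longrightarrow> 1 - u i * v j \<noteq> 0"
    and "\<And>i j. i \<in> {1..N} \<Longrightarrow> j \<in> {1..N} \<Longrightarrow> 1 - q * u i * v j \<noteq> 0"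
    and "\<And>i j. i \<in> {1..N} \<Longrightarrow> j \<in> {1..N} \<Longrightarrow> i \<noteq> j \<Longrightarrow> u i \<noteq> u j"
    and "\<And>i j. i \<in> {1..N} \<Longrightarrow> j \<in> {1..N} \<Longrightarrow> i \<noteq> j \<Longrightarrow> v i \<noteq> v j"
    and "\<And>i. i \<in> {1..N} \<Longrightarrow> u i \<noteq> 0"
    and "\<And>i. i \<in> {1..N} \<Longrightarrow> v i \<noteq> 0"
  shows "(\<Prod>i\<in>{1..N}. \<Prod>j\<in>{1..N}. 1 - q * u i * v j) / (vdm N u * vdm N v)
           * det (mat N N (\<lambda>(i, j). ZZ q \<gamma> s0 \<xi>0 (u (i+1)) (v (j+1))))
         = det (mat N N (\<lambda>(i, j). MM N q \<gamma> s0 \<xi>0 u (i+1) (v (j+1)))) / vdm N v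
       \<and> det (mat N N (\<lambda>(i, j). MM N q \<gamma> s0 \<xi>0 u (i+1) (v (j+1)))) / vdm N v
         = det (mat N N (\<lambda>(i, j). MMt N q \<gamma> s0 \<xi>0 v (i+1) (u (j+1)))) / vdm N u"
proof -
  note g = assms(2) and xi = assms(3)
  have inj_u: "inj_on u {1..N}" and inj_v: "inj_on v {1..N}"
    using assms(6,7) unfolding inj_on_def by blast+
  define PP where "PP = (\<Prod>i\<in>{1..N}. \<Prod>j\<in>{1..N}. 1 - q * u i * v j)"
  define dZ where "dZ = det (mat N N (\<lambda>(i, j). ZZ q \<gamma> s0 \<xi>0 (u (i+1)) (v (j+1))))"
  define dM where "dM = det (mat N N (\<lambda>(i, j). MM N q \<gamma> s0 \<xi>0 u (i+1) (v (j+1))))"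
  define dMt where "dMt = det (mat N N (\<lambda>(i, j). MMt N q \<gamma> s0 \<xi>0 v (i+1) (u (j+1))))"
  have M: "dM * vdm N u = PP * dZ"
    unfolding dM_def PP_def dZ_def using assms(9,4,5) by (rule det_MM_mult_vdm[OF g xi inj_u])
  have Mt: "dMt * vdm N v = PP * dZ"
    unfolding dMt_def PP_def dZ_def using assms(8,4,5) by (rule det_MMt_mult_vdm[OF g xi inj_v])
  have "vdm N u \<noteq> 0" "vdm N v \<noteq> 0"
    using inj_u inj_v by (simp_all add: vdm_nonzero)
  with M Mt show ?thesis
    unfolding PP_def[symmetric] dZ_def[symmetric] dM_def[symmetric] dMt_def[symmetric]
    by (simp add: field_simps)
qed

end
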